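(* For every $x\in P$ (the poset defined below) there is a sequence $(x_i)_{i<\omega}$ in $P$ such that either $x_i<x_j$ for all $j<i<\omega$ and $x$ is the greatest lower bound of $\{x_i: i<\omega\}$ in $P$, or $x_i<x_j$ for all $i<j<\omega$ and $x$ is the least upper bound of $\{x_i:i<\omega\}$ in $P$.
   Context: Let $P=\{p\}\cup\{p_{i_0,\ldots,i_n}: 0\le n<\omega,\ i_0,\ldots,i_n\in\omega\}$ (all these symbols distinct). Let $\le$ be the reflexive–transitive closure of the following strict relations: (0) for all $0\le j<i<\omega$: $p<p_i<p_j$; (E) for all $r\ge 0$, all $i_0,\ldots,i_{2r}\in\omega$, all $k\le i_{2r}$ and all $i<j<\omega$: $p_{i_0,\ldots,i_{2r},i}<p_{i_0,\ldots,i_{2r},j}<p_{i_0,\ldots,i_{2r-1},k}$ (for $r=0$ the last element is $p_k$); (O) for all $r\ge0$, all $i_0,\ldots,i_{2r+1}\in\omega$, all $k\le i_{2r+1}$ and all $j<i<\omega$: $p_{i_0,\ldots,i_{2r},k}<p_{i_0,\ldots,i_{2r+1},i}<p_{i_0,\ldots,i_{2r+1},j}$. This $\le$ is a partial order. *)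

theory Defs
  imports Main
begin

text \<open>Elements of P are encoded as lists of naturals: the empty list is p,
  and the nonempty list [i0,...,in] is p_{i0,...,in}.\<close>

definition gen :: "nat list \<Rightarrow> nat list \<Rightarrow> bool" where
  "gen x y \<longleftrightarrow>
     \<comment> \<open>(0): for j < i, p < p_i < p_j\<close>
     (\<exists>i j. j < i \<and> ((x = [] \<and> y = [i]) \<or> (x = [i] \<and> y = [j])))
   \<or> \<comment> \<open>(E): s = i_0..i_{2r}, k \<le> i_{2r}, i < j: s@[i] < s@[j] < butlast s @ [k]\<close>
     (\<exists>s i j k. odd (length s) \<and> k \<le> last s \<and> i < j \<and>
        ((x = s @ [i] \<and> y = s @ [j]) \<or> (x = s @ [j] \<and> y = butlast s @ [k])))
   \<or> \<comment> \<open>(O): s = i_0..i_{2r+1}, k \<le> i_{2r+1}, j < i: butlast s @ [k] < s@[i] < s@[j]\<close>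
     (\<exists>s i j k. even (length s) \<and> s \<noteq> [] \<and> k \<le> last s \<and> j < i \<and>
        ((x = butlast s @ [k] \<and> y = s @ [i]) \<or> (x = s @ [i] \<and> y = s @ [j])))"

definition Ple :: "nat list \<Rightarrow> nat list \<Rightarrow> bool" where
  "Ple = gen\<^sup>*\<^sup>*"

definition Pless :: "nat list \<Rightarrow> nat list \<Rightarrow> bool" where
  "Pless x y \<longleftrightarrow> Ple x y \<and> x \<noteq> y"

definition P_glb :: "nat list \<Rightarrow> nat list set \<Rightarrow> bool" where
  "P_glb x A \<longleftrightarrow> (\<forall>a\<in>A. Ple x a) \<and> (\<forall>z. (\<forall>a\<in>A. Ple z a) \<longrightarrow> Ple z x)"

definition P_lub :: "nat list \<Rightarrow> nat list set \<Rightarrow> bool" where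
  "P_lub x A \<longleftrightarrow> (\<forall>a\<in>A. Ple a x) \<and> (\<forall>z. (\<forall>a\<in>A. Ple a z) \<longrightarrow> Ple x z)"

end

theory Submission imports Defs begin

(* Nodes of P are lists; the children of a node x are the lists x @ [i].
   By the generating relations, the children of x form a chain: increasing in i when
   length x is odd, decreasing in i when length x is even (this includes the root p = []).
   In the odd case every child lies below x, in the even case above x, so x bounds the
   chain; we show it is the least upper (resp. greatest lower) bound.

   The key invariant concerns the cone  cone x n  of nodes x @ m # w with m \<ge> n.  For odd
   length x, every generating step leaving the cone upward either stays in the cone or
   reaches a node above x (odd_cone_step); hence everything above x @ [n] is above x or in
   cone x n (above_child_odd).  An upper bound z of all children lies above the child
   x @ [Suc (z ! length x)] but not in its cone, so z is above x.  The even case is the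
   order dual (even_cone_step, below_child_even). *)

lemma gen_siblings_even:
  assumes "even (length x)" and "j < i"
  shows "gen (x @ [i]) (x @ [j])"
proof (cases "x = []")
  case True
  then show ?thesis using assms(2) unfolding gen_def by auto
next
  case False
  then show ?thesis using assms unfolding gen_def by blast
qed

lemma gen_siblings_odd:
  assumes "odd (length x)" and "i < j"
  shows "gen (x @ [i]) (x @ [j])"
  using assms unfolding gen_def
  by (intro disjI2 disjI1 exI[of _ x] exI[of _ i] exI[of _ j] exI[of _ "last x"]) simp

lemma gen_child_odd:
  assumes "odd (length x)"
  shows "gen (x @ [Suc i]) x"
proof -
  have "x \<noteq> []" using assms by auto
  moreover have "gen (x @ [Suc i]) (butlast x @ [last x])"
    using assms unfolding gen_def
    by (intro disjI2 disjI1 exI[of _ x] exI[of _ i] exI[of _ "Suc i"] exI[of _ "last x"]) simp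
  ultimately show ?thesis by simp
qed

lemma gen_child_even:
  assumes "even (length x)"
  shows "gen x (x @ [Suc i])"
proof (cases "x = []")
  case True
  then show ?thesis unfolding gen_def by auto
next
  case False
  have "gen (butlast x @ [last x]) (x @ [Suc i])"
    using assms False unfolding gen_def
    by (intro disjI2 exI[of _ x] exI[of _ "Suc i"] exI[of _ 0] exI[of _ "last x"]) simp
  then show ?thesis using False by simp
qed

lemma Ple_siblings_even:
  assumes "even (length x)" and "j \<le> i"
  shows "Ple (x @ [i]) (x @ [j])"
  using assms gen_siblings_even[of x j i] unfolding Ple_def
  by (cases "j = i") auto

lemma Ple_siblings_odd:
  assumes "odd (length x)" and "i \<le> j"
  shows "Ple (x @ [i]) (x @ [j])"
  using assms gen_siblings_odd[of x i j] unfolding Ple_def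
  by (cases "i = j") auto

definition cone :: "nat list \<Rightarrow> nat \<Rightarrow> nat list set" where
  "cone x n = {x @ m # w | m w. n \<le> m}"

(* A node never lies in the cone whose bound exceeds its own index at position length x;
   this is what lets a bound z escape the cone of a suitably chosen child. *)
lemma not_in_own_cone: "z \<notin> cone x (Suc (z ! length x))"
  unfolding cone_def by auto

lemma cone_change_last:
  assumes "s @ [i] \<in> cone x n" and "s = x \<Longrightarrow> i \<le> j"
  shows "s @ [j] \<in> cone x n"
proof -
  obtain m w where m: "n \<le> m" and sw: "s @ [i] = x @ m # w"
    using assms(1) unfolding cone_def by blast
  show ?thesis
  proof (cases w rule: rev_cases)
    case Nil
    then show ?thesis using sw m assms(2) unfolding cone_def by auto
  next
    case (snoc u a)
    then have "s = x @ m # u" using sw by (metis append_Cons append_assoc butlast_snoc)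
    then show ?thesis using m unfolding cone_def by auto
  qed
qed

lemma cone_nephew:
  assumes "s @ [k] \<in> cone x n" and "k \<le> a"
  shows "s @ [a, i] \<in> cone x n"
proof -
  have "s @ [a] \<in> cone x n" using cone_change_last[OF assms(1)] assms(2) by blast
  then obtain m w where "n \<le> m" "s @ [a] = x @ m # w" unfolding cone_def by blast
  then have "n \<le> m" "s @ [a, i] = x @ m # (w @ [i])" by (metis append_Cons append_assoc append_Nil)+
  then show ?thesis unfolding cone_def by blast
qed

lemma cone_uncle:
  assumes "s @ [j] \<in> cone x n" and "s \<noteq> x" and "length s \<noteq> Suc (length x)"
  shows "butlast s @ [k] \<in> cone x n"
proof -
  obtain m w where m: "n \<le> m" and sw: "s @ [j] = x @ m # w"
    using assms(1) unfolding cone_def by blast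
  have "w \<noteq> []" using sw assms(2) by auto
  then obtain u a where "w = u @ [a]" by (cases w rule: rev_cases) auto
  then have su: "s = x @ m # u" using sw by (metis append_Cons append_assoc butlast_snoc)
  then have "u \<noteq> []" using assms(3) by auto
  then have "butlast s = x @ m # butlast u" using su by (simp add: butlast_append)
  then show ?thesis using m unfolding cone_def by auto
qed

lemma cone_length: "y \<in> cone x n \<Longrightarrow> length x < length y"
  unfolding cone_def by auto

lemma odd_cone_step:
  assumes odd: "odd (length x)" and step: "gen y z" and y: "y \<in> cone x n"
  shows "Ple x z \<or> z \<in> cone x n"
  using step unfolding gen_def
proof (elim disjE exE conjE)
  fix i j assume "y = []"
  then show ?thesis using cone_length[OF y] by auto
next
  fix i j assume "j < i" "y = [i]" "z = [j]"
  then show ?thesis using y odd cone_length[OF y] by auto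
next
  fix s i j k assume "i < j" "y = s @ [i]" "z = s @ [j]"
  then show ?thesis using cone_change_last y by auto
next
  fix s i j k assume s: "odd (length s)" "k \<le> last s" and yz: "y = s @ [j]" "z = butlast s @ [k]"
  show ?thesis
  proof (cases "s = x")
    case True
    then have "Ple (butlast x @ [last x]) z" using Ple_siblings_even s odd yz by auto
    moreover have "x \<noteq> []" using odd by auto
    ultimately show ?thesis by simp
  next
    case False
    have "length s \<noteq> Suc (length x)" using s odd by auto
    then show ?thesis using cone_uncle[of s j x n k] False y yz by simp
  qed
next
  fix s i j k assume s: "s \<noteq> []" "k \<le> last s" and yz: "y = butlast s @ [k]" "z = s @ [i]"
  have "butlast s @ [last s, i] \<in> cone x n" using cone_nephew y yz s by simp
  moreover have "butlast s @ [last s, i] = z" using yz s by simp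
  ultimately show ?thesis by simp
next
  fix s i j k assume "even (length s)" "y = s @ [i]" "z = s @ [j]"
  then show ?thesis using cone_change_last[of s i x n j] y odd by auto
qed

lemma even_cone_step:
  assumes even: "even (length x)" and step: "gen z y" and y: "y \<in> cone x n"
  shows "Ple z x \<or> z \<in> cone x n"
  using step unfolding gen_def
proof (elim disjE exE conjE)
  fix i j assume "z = []" "y = [i]"
  then show ?thesis using cone_length[OF y] unfolding Ple_def by auto
next
  fix i j assume "j < i" "z = [i]" "y = [j]"
  then show ?thesis using cone_change_last[of "[]" j x n i] y by auto
next
  fix s i j k assume "odd (length s)" "z = s @ [i]" "y = s @ [j]"
  then show ?thesis using cone_change_last[of s j x n i] y even by auto
next
  fix s i j k assume s: "odd (length s)" "k \<le> last s" and zy: "z = s @ [j]" "y = butlast s @ [k]"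
  have "butlast s @ [last s, j] \<in> cone x n" using cone_nephew y zy s by simp
  moreover have "butlast s @ [last s, j] = z" using zy s by (cases s rule: rev_cases) auto
  ultimately show ?thesis by simp
next
  fix s i j k assume s: "even (length s)" "s \<noteq> []" "k \<le> last s"
    and zy: "z = butlast s @ [k]" "y = s @ [i]"
  show ?thesis
  proof (cases "s = x")
    case True
    have "odd (length (butlast x))" using True s by simp
    from Ple_siblings_odd[OF this, of k "last x"]
    show ?thesis using True s zy by simp
  next
    case False
    have "length s \<noteq> Suc (length x)" using s even by auto
    then show ?thesis using cone_uncle[of s i x n k] False y zy by simp
  qed
next
  fix s i j k assume "j < i" "z = s @ [i]" "y = s @ [j]"
  then show ?thesis using cone_change_last[of s j x n i] y by auto
qed

lemma above_child_odd:
  assumes odd: "odd (length x)" and "Ple (x @ [n]) z"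
  shows "Ple x z \<or> z \<in> cone x n"
  using assms(2) unfolding Ple_def
proof (induction rule: rtranclp_induct)
  case base
  then show ?case unfolding cone_def by auto
next
  case (step y z)
  then show ?case using odd_cone_step[OF odd step.hyps(2)] unfolding Ple_def
    by (meson rtranclp.rtrancl_into_rtrancl)
qed

lemma below_child_even:
  assumes even: "even (length x)" and "Ple z (x @ [n])"
  shows "Ple z x \<or> z \<in> cone x n"
  using assms(2) unfolding Ple_def
proof (induction rule: converse_rtranclp_induct)
  case base
  then show ?case unfolding cone_def by auto
next
  case (step z y)
  then show ?case using even_cone_step[OF even step.hyps(1)] unfolding Ple_def
    by (meson converse_rtranclp_into_rtranclp)
qed

lemma children_lub_odd:
  assumes odd: "odd (length x)"
  shows "(\<forall>i j. i < j \<longrightarrow> Pless (x @ [i]) (x @ [j])) \<and> P_lub x (range (\<lambda>i. x @ [i]))"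
proof (intro conjI allI impI)
  fix i j :: nat assume "i < j"
  then show "Pless (x @ [i]) (x @ [j])"
    using gen_siblings_odd[OF odd] unfolding Pless_def Ple_def by auto
next
  have below: "Ple (x @ [i]) x" for i
    using gen_siblings_odd[OF odd, of i "Suc i"] gen_child_odd[OF odd, of i] unfolding Ple_def
    by (meson lessI converse_rtranclp_into_rtranclp r_into_rtranclp)
  have least: "Ple x z" if "\<forall>a\<in>range (\<lambda>i. x @ [i]). Ple a z" for z
    using above_child_odd[OF odd, of "Suc (z ! length x)" z] that not_in_own_cone by auto
  show "P_lub x (range (\<lambda>i. x @ [i]))"
    unfolding P_lub_def using below least by auto
qed

lemma children_glb_even:
  assumes even: "even (length x)"
  shows "(\<forall>i j. j < i \<longrightarrow> Pless (x @ [i]) (x @ [j])) \<and> P_glb x (range (\<lambda>i. x @ [i]))"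
proof (intro conjI allI impI)
  fix i j :: nat assume "j < i"
  then show "Pless (x @ [i]) (x @ [j])"
    using gen_siblings_even[OF even] unfolding Pless_def Ple_def by auto
next
  have above: "Ple x (x @ [i])" for i
    using gen_siblings_even[OF even, of i "Suc i"] gen_child_even[OF even, of i] unfolding Ple_def
    by (meson lessI converse_rtranclp_into_rtranclp r_into_rtranclp)
  have greatest: "Ple z x" if "\<forall>a\<in>range (\<lambda>i. x @ [i]). Ple z a" for z
    using below_child_even[OF even, of z "Suc (z ! length x)"] that not_in_own_cone by auto
  show "P_glb x (range (\<lambda>i. x @ [i]))"
    unfolding P_glb_def using above greatest by auto
qed

theorem mainTheorem7:
  fixes x :: "nat list"
  shows "\<exists>xs :: nat \<Rightarrow> nat list.
    ((\<forall>i j. j < i \<longrightarrow> Pless (xs i) (xs j)) \<and> P_glb x (range xs))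
  \<or> ((\<forall>i j. i < j \<longrightarrow> Pless (xs i) (xs j)) \<and> P_lub x (range xs))"
proof (cases "even (length x)")
  case True
  then show ?thesis using children_glb_even by (intro exI[of _ "\<lambda>i. x @ [i]"]) simp
next
  case False
  then show ?thesis using children_lub_odd by (intro exI[of _ "\<lambda>i. x @ [i]"]) simp
qed

end
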